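(* Let $Z$ be a countable well-partially-ordered set and let $n\in\mathbb{N}$. For every $z\in Z$, $\mathrm{rk}(z)<\omega\cdot n$ if and only if $z\in A_n(Z)$.
   Context: A well partial order (wpo) is a partial order in which every infinite sequence $x_0,x_1,\dots$ has $i<j$ with $x_i\le x_j$. The rank of $z$ in a well-founded poset $Z$ is $\mathrm{rk}(z)=\sup\{\mathrm{rk}(y)+1: y<z\}$ ($\sup\emptyset=0$). An acceleration candidate is a strictly increasing sequence $z_0<z_1<\cdots$; it goes through a set $A$ if some $z_i\in A$, and is below $z$ if $z_i\le z$ for all $i$. Define $A_0(Z)=\emptyset$ and, for an ordinal $\alpha>0$, $A_\alpha(Z)$ as the set of $z\in Z$ such that every acceleration candidate below $z$ goes through $A_\beta(Z)$ for some $\beta<\alpha$. *)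

theory Defs
  imports "HOL-Library.Countable_Set"
begin

text \<open>A poset is modelled as a subset Z of a type with a partial order
 (class order); the order on Z is the induced one.\<close>

definition wpo :: "'a::order set \<Rightarrow> bool" where
  "wpo Z \<longleftrightarrow> (\<forall>x::nat \<Rightarrow> 'a. (\<forall>i. x i \<in> Z) \<longrightarrow> (\<exists>i j. i < j \<and> x i \<le> x j))"

definition acc_candidate :: "'a::order set \<Rightarrow> (nat \<Rightarrow> 'a) \<Rightarrow> bool" where
  "acc_candidate Z f \<longleftrightarrow> (\<forall>i. f i \<in> Z \<and> f i < f (Suc i))"

definition below :: "(nat \<Rightarrow> 'a::order) \<Rightarrow> 'a \<Rightarrow> bool" where
  "below f z \<longleftrightarrow> (\<forall>i. f i \<le> z)"

definition goes_through :: "(nat \<Rightarrow> 'a) \<Rightarrow> 'a set \<Rightarrow> bool" where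
  "goes_through f A \<longleftrightarrow> (\<exists>i. f i \<in> A)"

text \<open>accAU Z k = (A_k(Z), union of A_j(Z) for j < k).  Since "goes through
 A_beta for some beta < alpha" is the same as "goes through the union of the
 A_beta, beta < alpha", this is a literal transcription of the definition
 for finite ordinals.\<close>
primrec accAU :: "'a::order set \<Rightarrow> nat \<Rightarrow> 'a set \<times> 'a set" where
  "accAU Z 0 = ({}, {})"
| "accAU Z (Suc k) =
     (let U = fst (accAU Z k) \<union> snd (accAU Z k)
      in ({z \<in> Z. \<forall>f. acc_candidate Z f \<and> below f z \<longrightarrow> goes_through f U}, U))"

definition A :: "'a::order set \<Rightarrow> nat \<Rightarrow> 'a set" where
  "A Z n = fst (accAU Z n)"

text \<open>rank_less Z k m = {z \<in> Z. rk z < omega*k + m}, by the standard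
 recursion on the ordinal bound alpha = omega*k+m for the set of elements of
 rank < alpha:  W_0 = {}, W_(alpha+1) = {z. all y < z have y \<in> W_alpha},
 W_lambda = union of W_beta, beta < lambda (here lambda = omega*(k+1) is the
 supremum of omega*k+m, m < omega).\<close>
fun rank_less :: "'a::order set \<Rightarrow> nat \<Rightarrow> nat \<Rightarrow> 'a set" where
  "rank_less Z 0 0 = {}"
| "rank_less Z (Suc k) 0 = (\<Union>m. rank_less Z k m)"
| "rank_less Z k (Suc m) = {z \<in> Z. \<forall>y \<in> Z. y < z \<longrightarrow> y \<in> rank_less Z k m}"

definition rank_less_omega_mult :: "'a::order set \<Rightarrow> 'a \<Rightarrow> nat \<Rightarrow> bool" where
  "rank_less_omega_mult Z z n \<longleftrightarrow> z \<in> rank_less Z n 0"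

end

theory Submission
  imports Defs
begin

text \<open>Write \<open>W\<^sub>k\<^sub>,\<^sub>m\<close> for \<open>rank_less Z k m\<close>, the elements of rank below \<open>\<omega>\<cdot>k + m\<close>.
  If \<open>z \<in> W\<^sub>k\<^sub>,\<^sub>m\<close>, an acceleration candidate below \<open>z\<close> avoiding \<open>W\<^sub>k\<^sub>,\<^sub>0\<close> would have its
  \<open>i\<close>-th term outside \<open>W\<^sub>k\<^sub>,\<^sub>i\<close>, which is impossible for \<open>i = m\<close>. Conversely, if \<open>z\<close> has
  rank at least \<open>\<omega>\<cdot>(k+1)\<close>, then for every \<open>m\<close> a minimal element below \<open>z\<close> outside
  \<open>W\<^sub>k\<^sub>,\<^sub>m\<close> has rank exactly \<open>\<omega>\<cdot>k + m\<close>. So the set \<open>X\<close> of elements below \<open>z\<close> of rank in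
  \<open>[\<omega>\<cdot>k, \<omega>\<cdot>(k+1))\<close> is unbounded: it lies in no \<open>W\<^sub>k\<^sub>,\<^sub>m\<close>. In a wpo an unbounded set
  contains a point whose upward closure is still unbounded; iterating this inside \<open>X\<close>
  yields an acceleration candidate below \<open>z\<close> avoiding \<open>W\<^sub>k\<^sub>,\<^sub>0\<close>. Hence \<open>W\<^sub>k\<^sub>+\<^sub>1\<^sub>,\<^sub>0\<close> obeys
  the recursion defining \<open>A\<^sub>k\<^sub>+\<^sub>1(Z)\<close>, and \<open>A\<^sub>n(Z) = W\<^sub>n\<^sub>,\<^sub>0\<close> by induction.\<close>

lemma rank_less_subset: "rank_less Z k m \<subseteq> Z"
  by (induction Z k m rule: rank_less.induct) auto

lemma rank_less_0_downward_closed: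
  "z \<in> rank_less Z k 0 \<Longrightarrow> y \<in> Z \<Longrightarrow> y < z \<Longrightarrow> y \<in> rank_less Z k 0"
proof (induction k)
  case 0
  then show ?case by simp
next
  case (Suc k)
  then obtain m where m: "z \<in> rank_less Z k m" by auto
  show ?case
  proof (cases m)
    case 0
    with Suc m show ?thesis by auto
  next
    case (Suc m')
    with m Suc.prems have "y \<in> rank_less Z k m'" by auto
    then show ?thesis by auto
  qed
qed

lemma mono_rank_less: "mono (rank_less Z k)"
proof (unfold mono_iff_le_Suc, intro allI)
  fix m
  show "rank_less Z k m \<subseteq> rank_less Z k (Suc m)"
  proof (induction m)
    case 0
    show ?case using rank_less_0_downward_closed[of _ Z k] rank_less_subset[of Z k 0] by auto
  qed auto
qed

lemma rank_less_downward_closed: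
  assumes "z \<in> rank_less Z k m" "y \<in> Z" "y \<le> z"
  shows "y \<in> rank_less Z k m"
proof (cases "y = z")
  case False
  with assms have "y < z" by simp
  show ?thesis
  proof (cases m)
    case 0
    with assms \<open>y < z\<close> show ?thesis using rank_less_0_downward_closed by blast
  next
    case (Suc m')
    with assms \<open>y < z\<close> have "y \<in> rank_less Z k m'" by auto
    then show ?thesis using monoD[OF mono_rank_less, of m' m] Suc by auto
  qed
qed (use assms in simp)

lemma wpoD:
  fixes x :: "nat \<Rightarrow> 'a::order"
  assumes "wpo Z" and "\<And>i. x i \<in> Z"
  shows "\<exists>i j. i < j \<and> x i \<le> x j"
  using assms(1)[unfolded wpo_def, rule_format, of x] assms(2) by blast

lemma wpo_wf: "wpo Z \<Longrightarrow> wf {(x, y). x \<in> Z \<and> y \<in> Z \<and> x < y}"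
proof (unfold wf_iff_no_infinite_down_chain, rule notI, elim exE)
  fix f :: "nat \<Rightarrow> 'a"
  assume "wpo Z" and f: "\<forall>i. (f (Suc i), f i) \<in> {(x, y). x \<in> Z \<and> y \<in> Z \<and> x < y}"
  then obtain i j where "i < j" "f i \<le> f j"
    using wpoD[of Z f] by blast
  moreover have "f j < f i"
    using \<open>i < j\<close> by (induction i j rule: less_Suc_induct) (use f in \<open>auto intro: order.strict_trans\<close>)
  ultimately show False by simp
qed

lemma wpo_unbounded_upset:
  fixes B :: "nat \<Rightarrow> 'a::order set"
  assumes wpo: "wpo Z" and "X \<subseteq> Z" and "mono B" and unbounded: "\<forall>m. \<not> X \<subseteq> B m"
  shows "\<exists>y\<in>X. \<forall>m. \<not> {w \<in> X. y \<le> w} \<subseteq> B m"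
proof (rule ccontr)
  assume "\<not> ?thesis"
  then have "\<forall>y\<in>X. \<exists>m. {w \<in> X. y \<le> w} \<subseteq> B m"
    by blast
  then obtain b where b: "\<And>y. y \<in> X \<Longrightarrow> {w \<in> X. y \<le> w} \<subseteq> B (b y)"
    using bchoice[of X "\<lambda>y m. {w \<in> X. y \<le> w} \<subseteq> B m"] by blast
  from unbounded obtain c where c: "\<And>m. c m \<in> X" "\<And>m. c m \<notin> B m"
    using choice[of "\<lambda>m w. w \<in> X \<and> w \<notin> B m"] by blast
  txt \<open>\<open>B (a (Suc n))\<close> already contains the upward closure of \<open>x n\<close> in \<open>X\<close>, whereas
    \<open>x j \<notin> B (a j)\<close>; so \<open>x i \<le> x j\<close> never holds for \<open>i < j\<close>.\<close>
  define a :: "nat \<Rightarrow> nat" where "a = rec_nat 0 (\<lambda>_ a'. a' + b (c a'))"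
  define x where "x n = c (a n)" for n
  have a_Suc: "a (Suc n) = a n + b (x n)" for n
    by (simp add: a_def x_def)
  have x_in_X: "x i \<in> X" for i
    by (simp add: x_def c(1))
  have "\<not> x i \<le> x j" if "i < j" for i j
  proof
    assume "x i \<le> x j"
    with b[OF x_in_X] x_in_X have "x j \<in> B (b (x i))"
      by blast
    moreover have "b (x i) \<le> a j"
      using lift_Suc_mono_le[of a "Suc i" j] that by (simp add: a_Suc)
    ultimately have "x j \<in> B (a j)"
      using monoD[OF \<open>mono B\<close>] by blast
    then show False
      using c(2)[of "a j"] unfolding x_def by blast
  qed
  moreover obtain i j where "i < j" "x i \<le> x j"
    using wpoD[OF wpo, of x] \<open>X \<subseteq> Z\<close> x_in_X by blast
  ultimately show False
    by blast
qed

lemma wpo_unbounded_chain: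
  fixes B :: "nat \<Rightarrow> 'a::order set"
  assumes wpo: "wpo Z" and "X \<subseteq> Z" and "mono B" and unbounded: "\<forall>m. \<not> X \<subseteq> B m"
    and covered: "\<forall>y\<in>X. \<exists>m. y \<in> B m"
  shows "\<exists>f. \<forall>n. f n \<in> X \<and> f n < f (Suc n)"
proof -
  define rich where "rich y \<longleftrightarrow> y \<in> X \<and> (\<forall>m. \<not> {w \<in> X. y \<le> w} \<subseteq> B m)" for y
  have rich_step: "\<exists>y'. rich y' \<and> y < y'" if "rich y" for y
  proof -
    from that covered obtain m0 where "y \<in> B m0"
      unfolding rich_def by blast
    have "\<not> {w \<in> X. y < w} \<subseteq> B m" for m
    proof -
      from \<open>rich y\<close> obtain w where w: "w \<in> X" "y \<le> w" "w \<notin> B (max m m0)"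
        unfolding rich_def by blast
      have "B m \<subseteq> B (max m m0)" "B m0 \<subseteq> B (max m m0)"
        using \<open>mono B\<close> by (simp_all add: monoD)
      with w \<open>y \<in> B m0\<close> have "w \<noteq> y" "w \<notin> B m"
        by blast+
      with w show ?thesis
        by (auto simp: order.order_iff_strict)
    qed
    with wpo_unbounded_upset[OF wpo _ \<open>mono B\<close>, of "{w \<in> X. y < w}"] \<open>X \<subseteq> Z\<close>
    obtain y' where "y' \<in> X" "y < y'" "\<forall>m. \<not> {w \<in> {w \<in> X. y < w}. y' \<le> w} \<subseteq> B m"
      by blast
    moreover have "{w \<in> {w \<in> X. y < w}. y' \<le> w} \<subseteq> {w \<in> X. y' \<le> w}"
      by blast
    ultimately show ?thesis
      unfolding rich_def by blast
  qed
  obtain y0 where "rich y0"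
    using wpo_unbounded_upset[OF wpo \<open>X \<subseteq> Z\<close> \<open>mono B\<close> unbounded] unfolding rich_def by blast
  then have "\<exists>f. \<forall>n. rich (f n) \<and> f n < f (Suc n)"
    using dependent_nat_choice[of "\<lambda>_. rich" "\<lambda>_ y y'. y < y'"] rich_step by blast
  then show ?thesis
    unfolding rich_def by blast
qed

lemma rank_less_Suc_0_goes_through:
  assumes "z \<in> rank_less Z (Suc k) 0" "acc_candidate Z f" "below f z"
  shows "goes_through f (rank_less Z k 0)"
proof (rule ccontr)
  assume "\<not> ?thesis"
  then have "f i \<notin> rank_less Z k i" for i
    using \<open>acc_candidate Z f\<close> unfolding goes_through_def acc_candidate_def
    by (induction i) auto
  moreover obtain m where "z \<in> rank_less Z k m"
    using assms(1) by auto
  then have "f m \<in> rank_less Z k m"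
    using assms(2,3) rank_less_downward_closed unfolding acc_candidate_def below_def by blast
  ultimately show False by blast
qed

lemma wpo_exists_below_rank_less_Suc_diff:
  assumes wpo: "wpo Z" and "z \<in> Z" and "z \<notin> rank_less Z k m"
  shows "\<exists>w\<in>Z. w \<le> z \<and> w \<in> rank_less Z k (Suc m) - rank_less Z k m"
proof -
  let ?Q = "{w \<in> Z. w \<le> z \<and> w \<notin> rank_less Z k m}"
  obtain w where w: "w \<in> ?Q" and minimal: "\<And>y. (y, w) \<in> {(x, y). x \<in> Z \<and> y \<in> Z \<and> x < y} \<Longrightarrow> y \<notin> ?Q"
    using wfE_min[OF wpo_wf[OF wpo], of z ?Q] assms(2,3) by blast
  have "y \<in> rank_less Z k m" if "y \<in> Z" "y < w" for y
    using minimal[of y] that w order.strict_implies_order[OF \<open>y < w\<close>] order.trans by blast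
  with w show ?thesis
    by auto
qed

lemma goes_through_rank_less_Suc_0:
  assumes wpo: "wpo Z" and "z \<in> Z"
    and through: "\<forall>f. acc_candidate Z f \<and> below f z \<longrightarrow> goes_through f (rank_less Z k 0)"
  shows "z \<in> rank_less Z (Suc k) 0"
proof (rule ccontr)
  assume z: "z \<notin> rank_less Z (Suc k) 0"
  define X where "X = {w \<in> Z. w \<le> z \<and> w \<in> rank_less Z (Suc k) 0 - rank_less Z k 0}"
  have "X \<subseteq> Z"
    unfolding X_def by blast
  have unbounded: "\<forall>m. \<not> X \<subseteq> rank_less Z k m"
  proof
    fix m
    from z have "z \<notin> rank_less Z k m"
      using rank_less.simps(2) by blast
    then obtain w where w: "w \<in> Z" "w \<le> z" "w \<in> rank_less Z k (Suc m) - rank_less Z k m"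
      using wpo_exists_below_rank_less_Suc_diff[OF wpo \<open>z \<in> Z\<close>] by blast
    moreover have "w \<in> rank_less Z (Suc k) 0"
      using w(3) rank_less.simps(2) by blast
    moreover have "rank_less Z k 0 \<subseteq> rank_less Z k m"
      by (rule monoD[OF mono_rank_less]) simp
    ultimately show "\<not> X \<subseteq> rank_less Z k m"
      unfolding X_def by blast
  qed
  have covered: "\<forall>y\<in>X. \<exists>m. y \<in> rank_less Z k m"
    unfolding X_def using rank_less.simps(2) by blast
  obtain f where f: "\<And>n. f n \<in> X" "\<And>n. f n < f (Suc n)"
    using wpo_unbounded_chain[OF wpo \<open>X \<subseteq> Z\<close> mono_rank_less unbounded covered] by blast
  then have "acc_candidate Z f" "below f z" "\<not> goes_through f (rank_less Z k 0)"
    unfolding acc_candidate_def below_def goes_through_def X_def by auto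
  with through show False
    by blast
qed

lemma rank_less_Suc_0_iff_goes_through:
  assumes "wpo Z" and "z \<in> Z"
  shows "z \<in> rank_less Z (Suc k) 0 \<longleftrightarrow>
    (\<forall>f. acc_candidate Z f \<and> below f z \<longrightarrow> goes_through f (rank_less Z k 0))"
  using rank_less_Suc_0_goes_through goes_through_rank_less_Suc_0[OF assms] by blast

lemma accAU_rank_less:
  assumes "wpo Z"
  shows "fst (accAU Z k) = rank_less Z k 0 \<and> snd (accAU Z k) \<subseteq> rank_less Z k 0"
proof (induction k)
  case (Suc k)
  then have U: "fst (accAU Z k) \<union> snd (accAU Z k) = rank_less Z k 0"
    by auto
  have "fst (accAU Z (Suc k)) = rank_less Z (Suc k) 0"
    using rank_less_subset[of Z "Suc k" 0] rank_less_Suc_0_iff_goes_through[OF assms]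
    by (auto simp: Let_def U simp del: rank_less.simps)
  moreover have "rank_less Z k 0 \<subseteq> rank_less Z (Suc k) 0"
    by auto
  ultimately show ?case
    by (simp add: Let_def U)
qed simp

theorem lemma15:
  fixes Z :: "'a::order set" and n :: nat
  assumes "countable Z" and "wpo Z" and "z \<in> Z"
  shows "rank_less_omega_mult Z z n \<longleftrightarrow> z \<in> A Z n"
  using accAU_rank_less[OF assms(2), of n] unfolding rank_less_omega_mult_def A_def by simp

end
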